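(* Let $\hat B_n^-(x)=\sum_{\sigma\in\mathcal B_n,\ \sigma(1)<0}x^{\hat d_B(\sigma)}$. Then $$\sum_{n\ge1}\hat B_n^-(x)\frac{z^n}{n!}=\frac{\cos(z(x-1))+\sin(z(x-1))-1}{(x-1)\cos(z(x-1))-(x+1)\sin(z(x-1))}.$$
   Context: $\mathcal B_n$ is the set of signed permutations (bijections $\sigma$ of $\{\pm1,\dots,\pm n\}$ with $\sigma(-i)=-\sigma(i)$), written as words $\sigma(1)\cdots\sigma(n)$ with $\sigma(0)=0$. $\hat d_B(\sigma)$ is the number of $i\in\{0\}\cup[n-1]$ such that either $\sigma(i)<\sigma(i+1)$ and $i$ is even, or $\sigma(i)>\sigma(i+1)$ and $i$ is odd. *)

theory Defs
  imports "HOL-Computational_Algebra.Formal_Power_Series"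
begin

text \<open>Signed permutations of size n, in word form sigma(1)...sigma(n):
  lists of nonzero integers whose absolute values are exactly 1..n, each once.\<close>
definition signed_perms :: "nat \<Rightarrow> int list set" where
  "signed_perms n = {w. length w = n \<and> distinct (map abs w) \<and> set (map abs w) = {1..int n}}"

definition sval :: "int list \<Rightarrow> nat \<Rightarrow> int" where
  "sval w i = (if i = 0 then 0 else w ! (i - 1))"

definition dhatB :: "int list \<Rightarrow> nat" where
  "dhatB w = card {i \<in> {0..<length w}.
      (sval w i < sval w (i + 1) \<and> even i) \<or> (sval w i > sval w (i + 1) \<and> odd i)}"

definition Bhat_minus :: "nat \<Rightarrow> real \<Rightarrow> real" where
  "Bhat_minus n x = (\<Sum>w \<in> {w \<in> signed_perms n. sval w 1 < 0}. x ^ dhatB w)"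

end

theory Submission
  imports Defs
begin

(* Removing the letter of largest absolute value m splits a signed permutation as L (\<plusminus>m) R.
   Since \<plusminus>m lies above or below both of its neighbours, the two signs together contribute the
   factor 1 + x^([L \<noteq> []] + [R \<noteq> []]) times the statistics of L and of R (the parity shift
   for R is harmless by the symmetry w \<mapsto> -w). This gives binomial-convolution recurrences, that
   is, the differential equations A' = A\<^sup>2 + (1 + x(A - 1))\<^sup>2 and B' = A + B E with
   E = A + x(1 + x(A - 1)) for the exponential generating functions A of all signed permutations
   and B of those with a negative first letter. E satisfies the Riccati equation
   E' = E\<^sup>2 + (x - 1)\<^sup>2, whose solution is a quotient of trigonometric series, and B is then
   obtained from a linear equation. *)

unbundle fps_syntax

section \<open>The alternating descent statistic\<close>

definition counted_step :: "bool \<Rightarrow> int \<Rightarrow> int \<Rightarrow> bool" where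
  "counted_step desc a b = (if desc then b < a else a < b)"

fun alt_des :: "bool \<Rightarrow> int list \<Rightarrow> nat" where
  "alt_des desc [] = 0"
| "alt_des desc [a] = 0"
| "alt_des desc (a # b # r) = of_bool (counted_step desc a b) + alt_des (\<not> desc) (b # r)"

lemma alt_des_conv_sum:
  "alt_des desc w = (\<Sum>i<length w - 1. of_bool (counted_step (desc \<noteq> odd i) (w ! i) (w ! Suc i)))"
proof (induction desc w rule: alt_des.induct)
  case (3 desc a b r)
  have "length (a # b # r) - 1 = Suc (length (b # r) - 1)" by simp
  then show ?case
    unfolding alt_des.simps 3 by (simp only: sum.lessThan_Suc_shift) simp
qed simp_all

lemma dhatB_eq_alt_des: "dhatB w = alt_des False (0 # w)"
proof -
  have "dhatB w = (\<Sum>i\<in>{0..<length w}. of_bool ((sval w i < sval w (i + 1) \<and> even i) \<or>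
      (sval w i > sval w (i + 1) \<and> odd i)))"
    unfolding dhatB_def by (simp add: sum.inter_filter[symmetric] of_bool_def)
  also have "\<dots> = alt_des False (0 # w)"
    unfolding alt_des_conv_sum
    by (intro sum.cong) (auto simp: sval_def counted_step_def nth_Cons' atLeast0LessThan)
  finally show ?thesis .
qed

lemma alt_des_Cons:
  "alt_des desc (a # w) = (if w = [] then 0 else of_bool (counted_step desc a (hd w)) + alt_des (\<not> desc) w)"
  by (cases w) auto

lemma alt_des_append_Cons:
  "alt_des desc (xs @ y # ys) = alt_des desc (xs @ [y]) + alt_des (desc \<noteq> odd (length xs)) (y # ys)"
proof (induction xs arbitrary: desc)
  case (Cons a xs)
  then show ?case by (cases xs) auto
qed simp

lemma alt_des_snoc:
  "xs \<noteq> [] \<Longrightarrow>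
    alt_des desc (xs @ [y]) = alt_des desc xs + of_bool (counted_step (desc \<noteq> odd (length xs - 1)) (last xs) y)"
proof (induction xs arbitrary: desc)
  case (Cons a xs)
  then show ?case using Cons.IH[of "\<not> desc"] by (cases xs) auto
qed simp

lemma alt_des_map_uminus: "alt_des desc (map uminus w) = alt_des (\<not> desc) w"
  by (induction desc w rule: alt_des.induct) (auto simp: counted_step_def)

section \<open>Signed arrangements\<close>

definition signed_arrangements :: "int set \<Rightarrow> int list set" where
  "signed_arrangements S = {w. distinct (map abs w) \<and> abs ` set w = S}"

lemma length_signed_arrangement: "w \<in> signed_arrangements S \<Longrightarrow> length w = card S"
  unfolding signed_arrangements_def using distinct_card[of "map abs w"] by auto

lemma signed_arrangements_empty [simp]: "signed_arrangements {} = {[]}"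
  unfolding signed_arrangements_def by auto

lemma finite_signed_arrangements:
  assumes "finite S"
  shows "finite (signed_arrangements S)"
proof (rule finite_subset)
  show "signed_arrangements S \<subseteq> {w. set w \<subseteq> S \<union> uminus ` S \<and> length w = card S}"
  proof (rule subsetI, rule CollectI, rule conjI)
    fix w assume w: "w \<in> signed_arrangements S"
    show "set w \<subseteq> S \<union> uminus ` S"
    proof
      fix y assume "y \<in> set w"
      then have "abs y \<in> S" using w unfolding signed_arrangements_def by auto
      then show "y \<in> S \<union> uminus ` S"
        by (cases "0 \<le> y") (auto intro: image_eqI[of _ _ "abs y"])
    qed
    show "length w = card S" using w by (rule length_signed_arrangement)
  qed
  show "finite {w. set w \<subseteq> S \<union> uminus ` S \<and> length w = card S}"
    using assms by (intro finite_lists_length_eq) auto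
qed

lemma signed_arrangements_eq_signed_perms: "signed_arrangements {1..int n} = signed_perms n"
  using length_signed_arrangement[of _ "{1..int n}"]
  unfolding signed_perms_def signed_arrangements_def by auto

lemma sum_signed_arrangements_alt_des_negate:
  "(\<Sum>w\<in>signed_arrangements S. f (alt_des (\<not> desc) w)) = (\<Sum>w\<in>signed_arrangements S. f (alt_des desc w))"
proof -
  have "bij_betw (map uminus) (signed_arrangements S) (signed_arrangements S)"
    by (rule bij_betw_byWitness[where f' = "map uminus"])
      (auto simp: signed_arrangements_def comp_def image_image)
  then show ?thesis
    using sum.reindex_bij_betw[of "map uminus" _ _ "\<lambda>w. f (alt_des desc w)"]
    by (simp add: alt_des_map_uminus)
qed

lemma inj_on_split_at_abs:
  assumes "m \<notin> T" "0 \<le> m"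
  shows "inj_on (\<lambda>(A, L, R, c). L @ c # R)
    (SIGMA A:Pow T. signed_arrangements A \<times> signed_arrangements (T - A) \<times> {m, -m})"
    (is "inj_on _ ?I")
proof (rule inj_onI)
  fix p p' assume "p \<in> ?I" "p' \<in> ?I" and eq_img: "(case p of (A, L, R, c) \<Rightarrow> L @ c # R) =
    (case p' of (A, L, R, c) \<Rightarrow> L @ c # R)"
  obtain A L R c A' L' R' c' where p: "p = (A, L, R, c)" and p': "p' = (A', L', R', c')"
    by (cases p, cases p') auto
  have in1: "A \<subseteq> T" "L \<in> signed_arrangements A" "c \<in> {m, -m}"
    and in2: "A' \<subseteq> T" "L' \<in> signed_arrangements A'" "c' \<in> {m, -m}"
    using \<open>p \<in> ?I\<close> \<open>p' \<in> ?I\<close> unfolding p p' by auto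
  have eq: "L @ c # R = L' @ c' # R'" using eq_img unfolding p p' by simp
  have "\<forall>y\<in>set L. abs y \<noteq> m" "\<forall>y\<in>set L'. abs y \<noteq> m"
    using in1 in2 assms(1) unfolding signed_arrangements_def by auto
  moreover have "abs c = m" "abs c' = m" using in1 in2 assms(2) by auto
  ultimately have "takeWhile (\<lambda>y. abs y \<noteq> m) (L @ c # R) = L"
    "takeWhile (\<lambda>y. abs y \<noteq> m) (L' @ c' # R') = L'"
    by (simp_all add: takeWhile_append2)
  then have "L = L'" using eq by simp
  moreover have "A = A'"
    using in1(2) in2(2) \<open>L = L'\<close> unfolding signed_arrangements_def by simp
  ultimately show "p = p'" using eq unfolding p p' by simp
qed

lemma image_split_at_abs:
  assumes "m \<notin> T" "0 \<le> m"
  shows "(\<lambda>(A, L, R, c). L @ c # R) `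
      (SIGMA A:Pow T. signed_arrangements A \<times> signed_arrangements (T - A) \<times> {m, -m})
    = signed_arrangements (insert m T)" (is "?img = _")
proof
  show "?img \<subseteq> signed_arrangements (insert m T)"
  proof clarify
    fix A L R c
    assume "A \<subseteq> T" "L \<in> signed_arrangements A" "R \<in> signed_arrangements (T - A)" "c \<in> {m, -m}"
    then have L: "distinct (map abs L)" "abs ` set L = A"
      and R: "distinct (map abs R)" "abs ` set R = T - A" and c: "abs c = m"
      using assms(2) unfolding signed_arrangements_def by auto
    have "abs ` set (L @ c # R) = insert m T" using L R c \<open>A \<subseteq> T\<close> by auto
    moreover have "distinct (map abs (L @ c # R))" using L R c assms(1) \<open>A \<subseteq> T\<close> by auto
    ultimately show "L @ c # R \<in> signed_arrangements (insert m T)"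
      unfolding signed_arrangements_def by simp
  qed
  show "signed_arrangements (insert m T) \<subseteq> ?img"
  proof
    fix w assume w: "w \<in> signed_arrangements (insert m T)"
    then have "m \<in> abs ` set w" unfolding signed_arrangements_def by auto
    then obtain c where c: "c \<in> set w" "abs c = m" by auto
    then obtain L R where w_split: "w = L @ c # R" by (meson split_list)
    define A where "A = abs ` set L"
    have d: "distinct (map abs L)" "distinct (map abs R)" "m \<notin> A" "m \<notin> abs ` set R"
      "A \<inter> abs ` set R = {}" "A \<union> insert m (abs ` set R) = insert m T"
      using w c unfolding w_split signed_arrangements_def A_def by auto
    have "A \<subseteq> T" "abs ` set R = T - A" using d(3-6) assms(1) by auto
    then have "A \<subseteq> T" "L \<in> signed_arrangements A" "R \<in> signed_arrangements (T - A)"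
      using d(1,2) unfolding signed_arrangements_def A_def by auto
    moreover have "c \<in> {m, -m}" using c by auto
    ultimately show "w \<in> ?img"
      unfolding w_split by (intro rev_image_eqI[of "(A, L, R, c)"]) auto
  qed
qed

lemma sum_signed_arrangements_insert:
  assumes "finite T" "m \<notin> T" "0 \<le> m"
  shows "(\<Sum>w\<in>signed_arrangements (insert m T). f w) =
    (\<Sum>A\<in>Pow T. \<Sum>L\<in>signed_arrangements A. \<Sum>R\<in>signed_arrangements (T - A). \<Sum>c\<in>{m, -m}.
      f (L @ c # R))"
proof -
  have "(\<Sum>w\<in>signed_arrangements (insert m T). f w) =
      (\<Sum>(A, L, R, c) \<in> (SIGMA A:Pow T. signed_arrangements A \<times> signed_arrangements (T - A) \<times> {m, -m}).
        f (L @ c # R))"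
    using sum.reindex[OF inj_on_split_at_abs[OF assms(2,3)], of f] image_split_at_abs[OF assms(2,3)]
    by (simp add: split_def)
  also have "\<dots> = (\<Sum>A\<in>Pow T. \<Sum>(L, R, c) \<in> signed_arrangements A \<times> signed_arrangements (T - A) \<times> {m, -m}.
      f (L @ c # R))"
    using assms(1)
    by (subst sum.Sigma) (auto intro!: finite_signed_arrangements intro: finite_subset)
  finally show ?thesis
    by (simp add: sum.cartesian_product split_def)
qed

section \<open>Removing the letter of largest absolute value\<close>

definition nonempty_weight :: "real \<Rightarrow> nat \<Rightarrow> real" where
  "nonempty_weight x n = (if n = 0 then 1 else x)"

definition max_insert_weight :: "real \<Rightarrow> nat \<Rightarrow> nat \<Rightarrow> real" where
  "max_insert_weight x j t = 1 + nonempty_weight x j * nonempty_weight x t"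

fun a_rec :: "real \<Rightarrow> nat \<Rightarrow> real" where
  "a_rec x 0 = 1"
| "a_rec x (Suc n) =
    (\<Sum>j\<le>n. real (n choose j) * (a_rec x j * a_rec x (n - j) * max_insert_weight x j (n - j)))"

fun b_rec :: "real \<Rightarrow> nat \<Rightarrow> real" where
  "b_rec x 0 = 0"
| "b_rec x (Suc n) = a_rec x n +
    (\<Sum>j\<le>n. real (n choose j) * (b_rec x j * a_rec x (n - j) * max_insert_weight x j (n - j)))"

lemma alt_des_split_at:
  "alt_des desc (L @ c # R) = alt_des desc L + alt_des (desc = odd (length L)) R
    + of_bool (L \<noteq> [] \<and> counted_step (desc \<noteq> even (length L)) (last L) c)
    + of_bool (R \<noteq> [] \<and> counted_step (desc \<noteq> odd (length L)) c (hd R))"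
proof (cases "L = []")
  case False
  then have "odd (length L - 1) = even (length L)" by (cases L) auto
  with False show ?thesis
    unfolding alt_des_append_Cons[of desc L c R] alt_des_snoc[OF False] alt_des_Cons by auto
qed (simp add: alt_des_Cons)

lemma sum_alt_des_insert_abs_max:
  fixes x :: real
  assumes "0 < m" and less_m: "\<forall>y\<in>set (L @ R). \<bar>y\<bar> < m"
  shows "(\<Sum>c\<in>{m, -m}. x ^ alt_des True (L @ c # R)) =
    x ^ alt_des True L * x ^ alt_des (odd (length L)) R * max_insert_weight x (length L) (length R)"
proof -
  \<comment> \<open>The steps on both sides of \<open>\<plusminus>m\<close> are counted for the same one of the two signs.\<close>
  have "L \<noteq> [] \<Longrightarrow> \<bar>last L\<bar> < m" "R \<noteq> [] \<Longrightarrow> \<bar>hd R\<bar> < m"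
    using less_m by auto
  then have "alt_des True (L @ c # R) = alt_des True L + alt_des (odd (length L)) R
      + (if (c = m) = even (length L) then of_bool (L \<noteq> []) + of_bool (R \<noteq> []) else 0)"
    if "c \<in> {m, -m}" for c
    using that \<open>0 < m\<close> unfolding alt_des_split_at by (auto simp: counted_step_def)
  moreover have "m \<noteq> -m" using \<open>0 < m\<close> by simp
  ultimately show ?thesis
    by (simp add: max_insert_weight_def nonempty_weight_def power_add algebra_simps)
qed

definition neg_head_weight :: "real \<Rightarrow> int list \<Rightarrow> real" where
  "neg_head_weight x w = (if w \<noteq> [] \<and> hd w < 0 then x ^ alt_des True w else 0)"

lemma sum_neg_head_weight_insert_abs_max:
  fixes x :: real
  assumes "0 < m" and less_m: "\<forall>y\<in>set (L @ R). \<bar>y\<bar> < m"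
  shows "(\<Sum>c\<in>{m, -m}. neg_head_weight x (L @ c # R)) =
    (if L = [] then x ^ alt_des False R
     else neg_head_weight x L * x ^ alt_des (odd (length L)) R * max_insert_weight x (length L) (length R))"
proof (cases "L = []")
  case True
  have "R \<noteq> [] \<Longrightarrow> \<bar>hd R\<bar> < m" using less_m by auto
  then show ?thesis
    using True \<open>0 < m\<close> by (auto simp: neg_head_weight_def alt_des_Cons counted_step_def)
next
  case False
  then have "(\<Sum>c\<in>{m, -m}. neg_head_weight x (L @ c # R)) =
      of_bool (hd L < 0) * (\<Sum>c\<in>{m, -m}. x ^ alt_des True (L @ c # R))"
    by (simp add: neg_head_weight_def sum_distrib_left)
  with False show ?thesis
    by (simp add: sum_alt_des_insert_abs_max[OF assms] neg_head_weight_def)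
qed

lemma sum_sum_mult_const:
  fixes f g :: "_ \<Rightarrow> 'a::comm_semiring_0"
  shows "(\<Sum>a\<in>A. \<Sum>b\<in>B. f a * g b * k) = k * sum f A * sum g B"
  by (simp add: sum_distrib_left sum_distrib_right mult_ac)

lemma sum_alt_des_split_at_abs_max:
  fixes x :: real
  assumes "finite T" "A \<subseteq> T" "0 < m" "\<forall>t\<in>T. t < m"
  shows "(\<Sum>L\<in>signed_arrangements A. \<Sum>R\<in>signed_arrangements (T - A). \<Sum>c\<in>{m, -m}.
      x ^ alt_des True (L @ c # R)) =
    max_insert_weight x (card A) (card T - card A) * (\<Sum>L\<in>signed_arrangements A. x ^ alt_des True L) *
      (\<Sum>R\<in>signed_arrangements (T - A). x ^ alt_des (odd (card A)) R)"
proof -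
  have "card (T - A) = card T - card A"
    using assms(1,2) by (simp add: card_Diff_subset finite_subset)
  with assms have "(\<Sum>L\<in>signed_arrangements A. \<Sum>R\<in>signed_arrangements (T - A). \<Sum>c\<in>{m, -m}.
        x ^ alt_des True (L @ c # R)) =
      (\<Sum>L\<in>signed_arrangements A. \<Sum>R\<in>signed_arrangements (T - A).
        x ^ alt_des True L * x ^ alt_des (odd (card A)) R * max_insert_weight x (card A) (card T - card A))"
    by (intro sum.cong refl, subst sum_alt_des_insert_abs_max)
      (auto simp: length_signed_arrangement signed_arrangements_def)
  then show ?thesis by (simp only: sum_sum_mult_const)
qed

lemma sum_neg_head_weight_split_at_abs_max:
  fixes x :: real
  assumes "finite T" "A \<subseteq> T" "A \<noteq> {}" "0 < m" "\<forall>t\<in>T. t < m"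
  shows "(\<Sum>L\<in>signed_arrangements A. \<Sum>R\<in>signed_arrangements (T - A). \<Sum>c\<in>{m, -m}.
      neg_head_weight x (L @ c # R)) =
    max_insert_weight x (card A) (card T - card A) * (\<Sum>L\<in>signed_arrangements A. neg_head_weight x L) *
      (\<Sum>R\<in>signed_arrangements (T - A). x ^ alt_des (odd (card A)) R)"
proof -
  have "card (T - A) = card T - card A"
    using assms(1,2) by (simp add: card_Diff_subset finite_subset)
  with assms have "(\<Sum>L\<in>signed_arrangements A. \<Sum>R\<in>signed_arrangements (T - A). \<Sum>c\<in>{m, -m}.
        neg_head_weight x (L @ c # R)) =
      (\<Sum>L\<in>signed_arrangements A. \<Sum>R\<in>signed_arrangements (T - A).
        neg_head_weight x L * x ^ alt_des (odd (card A)) R * max_insert_weight x (card A) (card T - card A))"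
    by (intro sum.cong refl, subst sum_neg_head_weight_insert_abs_max)
      (auto simp: length_signed_arrangement signed_arrangements_def)
  then show ?thesis by (simp only: sum_sum_mult_const)
qed

lemma sum_Pow_card:
  fixes g :: "nat \<Rightarrow> 'a::comm_semiring_1"
  assumes "finite T"
  shows "(\<Sum>A\<in>Pow T. g (card A)) = (\<Sum>j\<le>card T. of_nat (card T choose j) * g j)"
proof -
  have "(\<Sum>A\<in>Pow T. g (card A)) = (\<Sum>j\<le>card T. \<Sum>A\<in>{A \<in> Pow T. card A = j}. g (card A))"
    using assms by (intro sum.group[symmetric]) (auto intro: card_mono)
  also have "\<dots> = (\<Sum>j\<le>card T. of_nat (card T choose j) * g j)"
    using n_subsets[OF assms] by (intro sum.cong refl) (simp add: Pow_def)
  finally show ?thesis .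
qed

lemma finite_pos_Max_induct [consumes 2, case_names empty insert_Max]:
  fixes S :: "int set"
  assumes "finite S" "\<forall>s\<in>S. 0 < s"
    and empty: "P {}"
    and insert_Max: "\<And>m T. finite T \<Longrightarrow> m \<notin> T \<Longrightarrow> 0 < m \<Longrightarrow> \<forall>t\<in>T. 0 < t \<and> t < m \<Longrightarrow>
      (\<And>B. B \<subseteq> T \<Longrightarrow> P B) \<Longrightarrow> P (insert m T)"
  shows "P S"
  using assms(1,2)
proof (induction "card S" arbitrary: S rule: less_induct)
  case less
  show ?case
  proof (cases "S = {}")
    case False
    define m where "m = Max S"
    have "m \<in> S" using Max_in[OF less.prems(1) False] by (simp add: m_def)
    then have S: "S = insert m (S - {m})" by auto
    have "P (insert m (S - {m}))"
    proof (rule insert_Max)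
      show "finite (S - {m})" "m \<notin> S - {m}" using less.prems(1) by simp_all
      show "0 < m" "\<forall>t\<in>S - {m}. 0 < t \<and> t < m"
        using less.prems \<open>m \<in> S\<close> by (auto simp: m_def order.not_eq_order_implies_strict)
      show "P B" if "B \<subseteq> S - {m}" for B
      proof (rule less.hyps)
        have "finite (S - {m})" using less.prems(1) by simp
        then show "card B < card S"
          using card_mono[OF _ that] card_Diff1_less[OF less.prems(1) \<open>m \<in> S\<close>] by linarith
        show "finite B" using that \<open>finite (S - {m})\<close> by (rule finite_subset)
        show "\<forall>s\<in>B. 0 < s" using that less.prems(2) by blast
      qed
    qed
    with S show ?thesis by simp
  qed (simp add: empty)
qed

lemma sum_alt_des_signed_arrangements:
  fixes x :: real
  assumes "finite S" "\<forall>s\<in>S. 0 < s"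
  shows "(\<Sum>w\<in>signed_arrangements S. x ^ alt_des desc w) = a_rec x (card S)"
  using assms
proof (induction S arbitrary: desc rule: finite_pos_Max_induct)
  case (insert_Max m T)
  define w where "w j = max_insert_weight x j (card T - j) * a_rec x j * a_rec x (card T - j)" for j
  have "(\<Sum>L\<in>signed_arrangements A. \<Sum>R\<in>signed_arrangements (T - A). \<Sum>c\<in>{m, -m}.
      x ^ alt_des True (L @ c # R)) = w (card A)" if "A \<subseteq> T" for A
    using sum_alt_des_split_at_abs_max[OF \<open>finite T\<close> that \<open>0 < m\<close>] insert_Max that
    by (simp add: w_def card_Diff_subset finite_subset)
  then have "(\<Sum>w\<in>signed_arrangements (insert m T). x ^ alt_des True w) = (\<Sum>A\<in>Pow T. w (card A))"
    using insert_Max by (simp add: sum_signed_arrangements_insert)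
  also have "\<dots> = a_rec x (card (insert m T))"
    unfolding sum_Pow_card[OF \<open>finite T\<close>] using insert_Max by (simp add: w_def mult_ac)
  finally show ?case
    using sum_signed_arrangements_alt_des_negate[where f = "\<lambda>k. x ^ k" and desc = True] by (cases desc) simp_all
qed simp

lemma sum_neg_head_weight_signed_arrangements:
  fixes x :: real
  assumes "finite S" "\<forall>s\<in>S. 0 < s"
  shows "(\<Sum>w\<in>signed_arrangements S. neg_head_weight x w) = b_rec x (card S)"
  using assms
proof (induction S rule: finite_pos_Max_induct)
  case (insert_Max m T)
  have a_rec: "(\<Sum>w\<in>signed_arrangements B. x ^ alt_des d w) = a_rec x (card B)" if "B \<subseteq> T" for B d
    using that insert_Max by (intro sum_alt_des_signed_arrangements) (auto intro: finite_subset)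
  define g where "g j = (if j = 0 then a_rec x (card T) else 0) +
    max_insert_weight x j (card T - j) * b_rec x j * a_rec x (card T - j)" for j
  have "(\<Sum>L\<in>signed_arrangements A. \<Sum>R\<in>signed_arrangements (T - A). \<Sum>c\<in>{m, -m}.
      neg_head_weight x (L @ c # R)) = g (card A)" if "A \<subseteq> T" for A
  proof (cases "A = {}")
    case True
    have "(\<Sum>c\<in>{m, -m}. neg_head_weight x (c # R)) = x ^ alt_des False R"
      if "R \<in> signed_arrangements T" for R
      using sum_neg_head_weight_insert_abs_max[where L = "[]" and R = R] that insert_Max
      by (auto simp: signed_arrangements_def)
    with True show ?thesis by (simp add: a_rec g_def)
  next
    case False
    then have "card A \<noteq> 0" using that \<open>finite T\<close> by (simp add: finite_subset)
    then show ?thesis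
      using sum_neg_head_weight_split_at_abs_max[OF \<open>finite T\<close> that False \<open>0 < m\<close>] insert_Max
        a_rec[of "T - A"] that
      by (simp add: g_def card_Diff_subset finite_subset)
  qed
  then have "(\<Sum>w\<in>signed_arrangements (insert m T). neg_head_weight x w) = (\<Sum>A\<in>Pow T. g (card A))"
    using insert_Max by (simp add: sum_signed_arrangements_insert)
  also have "\<dots> = b_rec x (card (insert m T))"
    unfolding sum_Pow_card[OF \<open>finite T\<close>] using insert_Max
    by (simp add: g_def sum.distrib ring_distribs mult_ac if_distrib[of "times _"] cong: if_cong)
  finally show ?case .
qed (simp add: neg_head_weight_def)

text \<open>For \<open>n = 0\<close> the value \<open>sval [] 1\<close> is unspecified, hence the hypothesis.\<close>

lemma Bhat_minus_eq_b_rec: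
  assumes "n \<noteq> 0"
  shows "Bhat_minus n x = b_rec x n"
proof -
  have "x ^ dhatB w = neg_head_weight x w" if "w \<in> signed_perms n" "sval w 1 < 0" for w
  proof -
    have "w \<noteq> []" using that(1) assms by (auto simp: signed_perms_def)
    then have "sval w 1 = hd w" by (simp add: sval_def hd_conv_nth)
    with that(2) \<open>w \<noteq> []\<close> show ?thesis
      by (simp add: neg_head_weight_def dhatB_eq_alt_des alt_des_Cons counted_step_def)
  qed
  moreover have "neg_head_weight x w = 0" if "w \<in> signed_perms n" "\<not> sval w 1 < 0" for w
    using that assms by (auto simp: neg_head_weight_def signed_perms_def sval_def hd_conv_nth)
  ultimately have "Bhat_minus n x = (\<Sum>w\<in>signed_perms n. neg_head_weight x w)"
    unfolding Bhat_minus_def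
    by (intro sum.mono_neutral_cong_left)
      (auto simp flip: signed_arrangements_eq_signed_perms intro: finite_signed_arrangements)
  also have "\<dots> = b_rec x n"
    using sum_neg_head_weight_signed_arrangements[of "{1..int n}" x]
    by (simp add: signed_arrangements_eq_signed_perms)
  finally show ?thesis .
qed

section \<open>Exponential generating functions\<close>

definition egf :: "(nat \<Rightarrow> 'a::field_char_0) \<Rightarrow> 'a fps" where
  "egf f = Abs_fps (\<lambda>n. f n / fact n)"

lemma egf_nth [simp]: "egf f $ n = f n / fact n"
  by (simp add: egf_def)

lemma fps_deriv_egf: "fps_deriv (egf f) = egf (\<lambda>n. f (Suc n))"
  by (rule fps_ext) (simp add: field_simps del: of_nat_Suc)

lemma egf_add: "egf f + egf g = egf (\<lambda>n. f n + g n)"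
  by (rule fps_ext) (simp add: add_divide_distrib)

lemma fps_const_mult_egf: "fps_const c * egf f = egf (\<lambda>n. c * f n)"
  by (rule fps_ext) simp

lemma egf_mult:
  "egf f * egf g = egf (\<lambda>n. \<Sum>j\<le>n. of_nat (n choose j) * (f j * g (n - j)))"
proof (rule fps_ext)
  fix n
  have "(egf f * egf g) $ n = (\<Sum>j\<le>n. f j / fact j * (g (n - j) / fact (n - j)))"
    by (simp add: fps_mult_nth atLeast0AtMost)
  also have "\<dots> = (\<Sum>j\<le>n. of_nat (n choose j) * (f j * g (n - j)) / fact n)"
    by (intro sum.cong refl) (simp add: binomial_fact field_simps)
  finally show "(egf f * egf g) $ n = egf (\<lambda>n. \<Sum>j\<le>n. of_nat (n choose j) * (f j * g (n - j))) $ n"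
    by (simp add: sum_divide_distrib)
qed

lemma egf_nonempty_weight_a_rec:
  "egf (\<lambda>n. nonempty_weight x n * a_rec x n) = 1 + fps_const x * (egf (a_rec x) - 1)"
  by (rule fps_ext) (simp add: nonempty_weight_def)

lemma fps_deriv_egf_a_rec:
  fixes x :: real
  defines "A \<equiv> egf (a_rec x)" and "A\<^sub>x \<equiv> egf (\<lambda>n. nonempty_weight x n * a_rec x n)"
  shows "fps_deriv A = A * A + A\<^sub>x * A\<^sub>x"
  unfolding A_def A\<^sub>x_def fps_deriv_egf egf_mult egf_add
  by (simp add: max_insert_weight_def algebra_simps sum.distrib)

lemma fps_deriv_egf_b_rec:
  fixes x :: real
  defines "A \<equiv> egf (a_rec x)" and "A\<^sub>x \<equiv> egf (\<lambda>n. nonempty_weight x n * a_rec x n)"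
    and "B \<equiv> egf (b_rec x)"
  shows "fps_deriv B = A + B * (A + fps_const x * A\<^sub>x)"
proof -
  have "b_rec x (Suc n) = a_rec x n + (\<Sum>j\<le>n. real (n choose j) *
      (b_rec x j * a_rec x (n - j) + x * (b_rec x j * (nonempty_weight x (n - j) * a_rec x (n - j)))))"
    for n
    by (simp add: max_insert_weight_def nonempty_weight_def algebra_simps, intro sum.cong refl)
      (auto simp: algebra_simps)
  then show ?thesis
    unfolding A_def A\<^sub>x_def B_def fps_deriv_egf egf_mult egf_add fps_const_mult_egf
    by (simp add: algebra_simps sum.distrib sum_distrib_left)
qed

section \<open>Solving the differential equations\<close>

lemma fps_linear_ode_zero:
  fixes Z K :: "'a::field_char_0 fps"
  assumes "fps_deriv Z = K * Z" "Z $ 0 = 0"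
  shows "Z = 0"
proof -
  have "\<forall>m\<le>n. Z $ m = 0" for n
  proof (induction n)
    case 0
    then show ?case using assms(2) by simp
  next
    case (Suc n)
    have "of_nat (Suc n) * Z $ Suc n = (K * Z) $ n"
      using fps_deriv_nth[of Z n] assms(1) by (simp add: algebra_simps)
    also have "\<dots> = (\<Sum>i=0..n. K $ i * Z $ (n - i))" by (rule fps_mult_nth)
    also have "\<dots> = 0" using Suc by (intro sum.neutral) auto
    finally have "Z $ Suc n = 0" by (simp del: of_nat_Suc)
    then show ?case using Suc by (auto simp: le_Suc_eq)
  qed
  then show ?thesis by (intro fps_ext) auto
qed

lemma fps_riccati_cos_sin:
  fixes a b :: "'a::field_char_0" and E :: "'a fps"
  assumes E': "fps_deriv E = E * E + fps_const (a * a)" and E0: "E $ 0 = b"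
  shows "(fps_const a * fps_cos a - fps_const b * fps_sin a) * E =
    fps_const a * (fps_const a * fps_sin a + fps_const b * fps_cos a)"
proof -
  define D where "D = fps_const a * fps_cos a - fps_const b * fps_sin a"
  define Q where "Q = fps_const a * (fps_const a * fps_sin a + fps_const b * fps_cos a)"
  have D': "fps_deriv D = - Q"
    by (simp add: D_def Q_def fps_sin_deriv fps_cos_deriv algebra_simps flip: fps_const_neg fps_const_mult)
  have Q': "fps_deriv Q = fps_const (a * a) * D"
    by (simp add: D_def Q_def fps_sin_deriv fps_cos_deriv algebra_simps flip: fps_const_neg fps_const_mult)
  have "D * E - Q = 0"
  proof (rule fps_linear_ode_zero)
    show "fps_deriv (D * E - Q) = E * (D * E - Q)"
      by (simp add: D' Q' E' algebra_simps)
    show "(D * E - Q) $ 0 = 0"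
      by (simp add: D_def Q_def E0 fps_sin_def fps_cos_def)
  qed
  then show ?thesis by (simp add: D_def Q_def)
qed

lemma fps_linear_ode_integrating_factor:
  fixes B D E F N :: "'a::field_char_0 fps"
  assumes B': "fps_deriv B = F + B * E" and D': "fps_deriv D = - (D * E)"
    and DF: "D * F = fps_deriv N" and init: "D $ 0 * B $ 0 = N $ 0"
  shows "D * B = N"
proof -
  have "fps_deriv (D * B - N) = 0"
    by (simp add: B' D' DF algebra_simps)
  moreover have "(D * B - N) $ 0 = 0"
    using init by simp
  ultimately show ?thesis
    by (metis fps_deriv_eq_0_iff fps_const_0_eq_0 right_minus_eq)
qed

lemma egf_system_solution:
  fixes x :: real and A B :: "real fps"
  defines "A\<^sub>x \<equiv> 1 + fps_const x * (A - 1)"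
  assumes x: "x \<noteq> 1"
    and A': "fps_deriv A = A * A + A\<^sub>x * A\<^sub>x" and A0: "A $ 0 = 1"
    and B': "fps_deriv B = A + B * (A + fps_const x * A\<^sub>x)" and B0: "B $ 0 = 0"
  shows "B = (fps_cos (x - 1) + fps_sin (x - 1) - 1) /
    (fps_const (x - 1) * fps_cos (x - 1) - fps_const (x + 1) * fps_sin (x - 1))"
proof -
  define X where "X = fps_const x"
  define c where "c = fps_cos (x - 1)"
  define s where "s = fps_sin (x - 1)"
  define D where "D = (X - 1) * c - (X + 1) * s"
  define Q where "Q = (X - 1) * ((X - 1) * s + (X + 1) * c)"
  define N where "N = c + s - 1"
  \<comment> \<open>\<open>E\<close> solves a Riccati equation, so \<open>E = Q / D\<close>; then \<open>D\<close> is an integrating factor for \<open>B\<close>.\<close>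
  define E where "E = A + X * A\<^sub>x"
  have Ax: "A\<^sub>x = 1 + X * (A - 1)" by (simp add: A\<^sub>x_def X_def)
  have X_consts: "fps_const (x - 1) = X - 1" "fps_const (x + 1) = X + 1" "fps_const (1 - x) = 1 - X"
    by (simp_all add: X_def flip: fps_const_add fps_const_sub)
  have c': "fps_deriv c = (1 - X) * s" and s': "fps_deriv s = (X - 1) * c"
    by (simp_all add: c_def s_def fps_cos_deriv fps_sin_deriv flip: X_consts)
  have D': "fps_deriv D = - Q"
    by (simp add: D_def Q_def c' s' X_def del: fps_deriv_eq_0_iff) algebra
  have E': "fps_deriv E = E * E + fps_const ((x - 1) * (x - 1))"
  proof -
    have "fps_deriv E = (1 + X * X) * fps_deriv A"
      by (simp add: E_def Ax X_def algebra_simps del: fps_deriv_eq_0_iff)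
    also have "\<dots> = E * E + (X - 1) * (X - 1)"
      unfolding A' E_def Ax by algebra
    finally show ?thesis by (simp add: X_consts flip: fps_const_mult)
  qed
  have DE: "D * E = Q"
    using fps_riccati_cos_sin[OF E', of "x + 1"] A0
    by (simp add: D_def Q_def E_def Ax c_def s_def X_consts X_def)
  have DA: "D * A = fps_deriv N"
  proof -
    have "(1 + X * X) * (D * A - fps_deriv N) = 0"
      using DE by (simp add: N_def c' s' D_def Q_def E_def Ax) algebra
    moreover have "1 + X * X = fps_const (1 + x * x)"
      by (simp add: X_def flip: fps_const_add fps_const_mult)
    moreover have "1 + x * x \<noteq> 0"
      using zero_le_square[of x] by linarith
    ultimately show ?thesis by simp
  qed
  have "D * B = N"
  proof (rule fps_linear_ode_integrating_factor)
    show "fps_deriv B = A + B * E" using B' by (simp add: E_def X_def)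
    show "fps_deriv D = - (D * E)" using D' DE by simp
    show "D $ 0 * B $ 0 = N $ 0" using B0 by (simp add: N_def c_def s_def)
  qed (rule DA)
  moreover have "D \<noteq> 0"
    using x by (auto simp: D_def c_def s_def X_def dest: arg_cong[of _ _ "\<lambda>f. f $ 0"])
  ultimately have "B = N / D"
    using fps_divide_times_eq[of D B] by (simp add: mult.commute)
  then show ?thesis
    by (simp add: D_def N_def c_def s_def X_consts)
qed

theorem mainTheorem8:
  fixes x :: real
  assumes "x \<noteq> 1"
  shows "Abs_fps (\<lambda>n. if n = 0 then 0 else Bhat_minus n x / fact n) =
    (fps_cos (x - 1) + fps_sin (x - 1) - 1) /
    (fps_const (x - 1) * fps_cos (x - 1) - fps_const (x + 1) * fps_sin (x - 1))"
proof -
  have "Abs_fps (\<lambda>n. if n = 0 then 0 else Bhat_minus n x / fact n) = egf (b_rec x)"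
    by (rule fps_ext) (simp add: Bhat_minus_eq_b_rec)
  also have "\<dots> = (fps_cos (x - 1) + fps_sin (x - 1) - 1) /
      (fps_const (x - 1) * fps_cos (x - 1) - fps_const (x + 1) * fps_sin (x - 1))"
    using fps_deriv_egf_a_rec[of x] fps_deriv_egf_b_rec[of x]
    unfolding egf_nonempty_weight_a_rec
    by (intro egf_system_solution assms) simp_all
  finally show ?thesis .
qed

end
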